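(* Let $\mathcal G$ be a Petri game with one system player whose underlying net is finite and bounded. If $\mathcal G$ has a winning, deadlock-avoiding strategy, then Player~0 has a winning strategy in the graph game $\mathit{Graph}(\mathcal G)$.
   Context: Petri nets. A Petri net is a tuple $\mathcal N=(\mathcal P,\mathcal T,\mathcal F,\mathit{In})$ where the set of places $\mathcal P$ and the set of transitions $\mathcal T$ are disjoint, the flow relation $\mathcal F$ is a multiset over $(\mathcal P\times\mathcal T)\cup(\mathcal T\times\mathcal P)$, and the initial marking $\mathit{In}$ is a finite multiset over $\mathcal P$. For a node $x$, the precondition ${}^\bullet x$ is the multiset with ${}^\bullet x(y)=\mathcal F(y,x)$ and the postcondition $x^\bullet$ is the multiset with $x^\bullet(y)=\mathcal F(x,y)$; every transition $t$ must satisfy $0<|{}^\bullet t|<\infty$ and $0<|t^\bullet|<\infty$. A marking is a finite multiset over $\mathcal P$. A transition $t$ is enabled in a marking $M$ if ${}^\bullet t\subseteq M$ (multiset inclusion); firing it yields $M'=M-{}^\bullet t+t^\bullet$, written $M\xrightarrow{t}M'$. A marking is reachable if it is obtained from $\mathit{In}$ by firing a finite sequence of transitions; $\mathcal R(\mathcal N)$ denotes the set of reachable markings. $\mathcal N$ is finite if $\mathcal P\cup\mathcal T$ is finite, $k$-bounded ($k\ge1$) if $M(p)\le k$ for all $M\in\mathcal R(\mathcal N)$ and $p\in\mathcal P$, and bounded if it is $k$-bounded for some $k$. For a function $f$ and a multiset $M$, $f[M]$ is the image multiset $f[M](y)=\sum_{x: f(x)=y}M(x)$. Occurrence nets and branching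 processes. Let $<$ be the transitive closure of $\{(x,y)\mid \mathcal F(x,y)>0\}$ and $\le$ its reflexive-transitive closure; the causal past of a node $x$ is $\lfloor x\rfloor=\{y\mid y\le x\}$, and $\lfloor S\rfloor=\bigcup_{x\in S}\lfloor x\rfloor$. Nodes $x,y$ are in conflict, $x\,\sharp\,y$, if there is a place $p\ne x,y$ and distinct transitions $t_1,t_2\in p^\bullet$ with $t_1\le x$ and $t_2\le y$. Nodes are concurrent if they are neither causally related ($x\le y$ or $y\le x$) nor in conflict. An occurrence net is a net in which pre- and postconditions of transitions are sets, every place has at most one incoming transition, $\mathit{In}=\{p\in\mathcal P\mid {}^\bullet p=\emptyset\}$, $\mathcal F^{-1}$ is well-founded, and no transition is in conflict with itself. A cut is a maximal set of pairwise concurrent places. A homomorphism from $\mathcal N_1$ to $\mathcal N_2$ is a map $\lambda:\mathcal P_1\cup\mathcal T_1\to\mathcal P_2\cup\mathcal T_2$ sending places to places and transitions to transitions with $\lambda[{}^\bullet t]={}^\bullet\lambda(t)$ and $\lambda[t^\bullet]=\lambda(t)^\bullet$ for all $t\in\mathcal T_1$; it is initial if $\lambda[\mathit{In}_1]=\mathit{In}_2$. An initial branching process of $\mathcal N$ is a pair $(\mathcal N^U,\lambda)$ with $\mathcal N^U$ an occurrence net and $\lambda$ an initial homomorphism $\mathcal N^U\to\mathcal N$ such that for all $t_1,t_2\in\mathcal T^U$, ${}^\bullet t_1={}^\bullet t_2$ and $\lambda(t_1)=\lambda(t_2)$ imply $t_1=t_2$. Petri games. A Petri game is $\mathcal G=(\mathcal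 P_S,\mathcal P_E,\mathcal T,\mathcal F,\mathit{In},\mathcal B)$ where $\mathcal P_S$ (system places) and $\mathcal P_E$ (environment places) are disjoint, $\mathcal N=(\mathcal P_S\cup\mathcal P_E,\mathcal T,\mathcal F,\mathit{In})$ is a finite Petri net (the underlying net) and $\mathcal B$ is a set of markings (bad markings). A transition $t$ is purely environmental if ${}^\bullet t\subseteq\mathcal P_E$, otherwise it is a system transition. $\mathcal G$ has one system player if every $M\in\mathcal R(\mathcal N)$ contains exactly one token on system places; that place is denoted $s_M$, and $s_M^\bullet$ is the set of transitions having $s_M$ in their precondition. A winning, deadlock-avoiding strategy for $\mathcal G$ is an initial branching process $(\mathcal N^\sigma,\lambda)$ of $\mathcal N$ such that, with $\mathcal P^\sigma_S=\lambda^{-1}(\mathcal P_S)\cap\mathcal P^\sigma$: (justified refusal) for every set $S$ of pairwise concurrent places of $\mathcal N^\sigma$ and every transition $\mathbf t$ of $\mathcal N$ with $\lambda[S]={}^\bullet\mathbf t$ such that no $t\in\mathcal T^\sigma$ has $\lambda(t)=\mathbf t$ and ${}^\bullet t=S$, there is $s\in S\cap\mathcal P^\sigma_S$ such that $\mathbf t\notin\lambda[s^\bullet]$; (safety) $\lambda[M]\notin\mathcal B$ for all $M\in\mathcal R(\mathcal N^\sigma)$; (determinism) for every $s\in\mathcal P^\sigma_S$ and every $M\in\mathcal R(\mathcal N^\sigma)$ containing $s$, at most one $t\in s^\bullet$ is enabled in $M$; (deadlock avoidance) for every $M\in\mathcal R(\mathcal N^\sigma)$, if some transition of $\mathcal N$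 is enabled in $\lambda[M]$ then some transition of $\mathcal N^\sigma$ is enabled in $M$. Graph games. A graph game $(\mathcal V_0,\mathcal V_1,\mathcal I,\mathcal E,\mathcal X)$ has disjoint vertex sets $\mathcal V_0,\mathcal V_1$ (of Players 0 and 1), initial vertex $\mathcal I$, edge relation $\mathcal E$ and bad vertices $\mathcal X$. A play is a maximal (finite or infinite) sequence $v_0v_1\dots$ with $v_0=\mathcal I$ and $(v_i,v_{i+1})\in\mathcal E$; it is won by Player~0 if no $v_i\in\mathcal X$. A strategy for Player~0 is a vertex-labeled tree whose root is labeled $\mathcal I$, where a node labeled with a $\mathcal V_1$ vertex has one child for each successor vertex and a node labeled with a $\mathcal V_0$ vertex having a successor has exactly one child labeled with one successor; it is winning if all maximal paths are labeled with plays won by Player~0. The game $\mathit{Graph}(\mathcal G)$: $\mathcal V_0=\{(M,\top)\mid M\in\mathcal R(\mathcal N)\}$, $\mathcal V_1=\{(M,c)\mid M\in\mathcal R(\mathcal N),\,c\subseteq s_M^\bullet\}$, $\mathcal I=(\mathit{In},\top)$. Edges: (E1) $(M,\top)\to(M,c)$ for every $c\subseteq s_M^\bullet$; (E2) $(M,c)\to(M',c)$ whenever some purely environmental $\mathbf t$ satisfies $M\xrightarrow{\mathbf t}M'$; (E3) $(M,c)\to(M',\top)$ whenever some system transition $\mathbf t\in c$ satisfies $M\xrightarrow{\mathbf t}M'$. Bad vertices: all $(M,c)\in\mathcal V_1$ such that (X1) $M\in\mathcal B$; or (X2a) two distinct transitions of $c$ are enabled in $M$; or (X2b) some $\mathbf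 t\in c$ is enabled in $M$ and $0<{}^\bullet\mathbf t(p)<M(p)$ for some place $p$; or (X3) some transition is enabled in $M$, every transition enabled in $M$ is a system transition, and no transition enabled in $M$ lies in $c$. *)

theory Defs
  imports Main "HOL-Library.Multiset"
begin

text \<open>A net is given by its place set, transition set, the flow relation (encoded by the
  pre- and postcondition multisets of each transition: F(p,t) = count (pre t) p,
  F(t,p) = count (post t) p) and the initial marking.  Places and transitions live in
  different types, hence are disjoint.\<close>

record ('p, 't) net =
  places :: "'p set"
  trans  :: "'t set"
  pre    :: "'t \<Rightarrow> 'p multiset"
  post   :: "'t \<Rightarrow> 'p multiset"
  init   :: "'p multiset"

definition wf_net :: "('p, 't) net \<Rightarrow> bool" where
  "wf_net N \<longleftrightarrow>
     (\<forall>t \<in> trans N. pre N t \<noteq> {#} \<and> post N t \<noteq> {#}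
        \<and> set_mset (pre N t) \<subseteq> places N \<and> set_mset (post N t) \<subseteq> places N)
     \<and> set_mset (init N) \<subseteq> places N"

definition enabled :: "('p, 't) net \<Rightarrow> 't \<Rightarrow> 'p multiset \<Rightarrow> bool" where
  "enabled N t M \<longleftrightarrow> t \<in> trans N \<and> pre N t \<subseteq># M"

definition fire :: "('p, 't) net \<Rightarrow> 't \<Rightarrow> 'p multiset \<Rightarrow> 'p multiset" where
  "fire N t M = M - pre N t + post N t"

inductive_set reach :: "('p, 't) net \<Rightarrow> 'p multiset set" for N where
  init: "init N \<in> reach N"
| step: "M \<in> reach N \<Longrightarrow> enabled N t M \<Longrightarrow> fire N t M \<in> reach N"

definition finite_net :: "('p, 't) net \<Rightarrow> bool" where
  "finite_net N \<longleftrightarrow> finite (places N) \<and> finite (trans N)"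

definition k_bounded :: "nat \<Rightarrow> ('p, 't) net \<Rightarrow> bool" where
  "k_bounded k N \<longleftrightarrow> (\<forall>M \<in> reach N. \<forall>p \<in> places N. count M p \<le> k)"

definition bounded_net :: "('p, 't) net \<Rightarrow> bool" where
  "bounded_net N \<longleftrightarrow> (\<exists>k \<ge> 1. k_bounded k N)"

text \<open>Nodes of a net: places as Inl, transitions as Inr.\<close>

definition flow_rel :: "('p, 't) net \<Rightarrow> ('p + 't) rel" where
  "flow_rel N =
     {(Inl p, Inr t) | p t. t \<in> trans N \<and> p \<in># pre N t}
   \<union> {(Inr t, Inl p) | p t. t \<in> trans N \<and> p \<in># post N t}"

definition causal_le :: "('p, 't) net \<Rightarrow> ('p + 't) \<Rightarrow> ('p + 't) \<Rightarrow> bool" where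
  "causal_le N x y \<longleftrightarrow> (x, y) \<in> (flow_rel N)\<^sup>*"

definition conflict :: "('p, 't) net \<Rightarrow> ('p + 't) \<Rightarrow> ('p + 't) \<Rightarrow> bool" where
  "conflict N x y \<longleftrightarrow>
     (\<exists>p \<in> places N. \<exists>t1 \<in> trans N. \<exists>t2 \<in> trans N.
        Inl p \<noteq> x \<and> Inl p \<noteq> y \<and> t1 \<noteq> t2 \<and> p \<in># pre N t1 \<and> p \<in># pre N t2
        \<and> causal_le N (Inr t1) x \<and> causal_le N (Inr t2) y)"

definition concurrent :: "('p, 't) net \<Rightarrow> ('p + 't) \<Rightarrow> ('p + 't) \<Rightarrow> bool" where
  "concurrent N x y \<longleftrightarrow> \<not> causal_le N x y \<and> \<not> causal_le N y x \<and> \<not> conflict N x y"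

definition occurrence_net :: "('p, 't) net \<Rightarrow> bool" where
  "occurrence_net N \<longleftrightarrow>
     wf_net N
     \<and> (\<forall>t \<in> trans N. \<forall>p. count (pre N t) p \<le> 1 \<and> count (post N t) p \<le> 1)
     \<and> (\<forall>p \<in> places N. \<forall>t1 \<in> trans N. \<forall>t2 \<in> trans N.
           p \<in># post N t1 \<and> p \<in># post N t2 \<longrightarrow> t1 = t2)
     \<and> (\<forall>p. count (init N) p \<le> 1)
     \<and> set_mset (init N) = {p \<in> places N. \<not> (\<exists>t \<in> trans N. p \<in># post N t)}
     \<and> wf (flow_rel N)
     \<and> (\<forall>t \<in> trans N. \<not> conflict N (Inr t) (Inr t))"

definition homomorphism ::
  "('q, 'u) net \<Rightarrow> ('p, 't) net \<Rightarrow> ('q \<Rightarrow> 'p) \<Rightarrow> ('u \<Rightarrow> 't) \<Rightarrow> bool" where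
  "homomorphism N1 N2 lp lt \<longleftrightarrow>
     lp ` places N1 \<subseteq> places N2 \<and> lt ` trans N1 \<subseteq> trans N2
     \<and> (\<forall>t \<in> trans N1. image_mset lp (pre N1 t) = pre N2 (lt t)
                       \<and> image_mset lp (post N1 t) = post N2 (lt t))"

definition initial_hom ::
  "('q, 'u) net \<Rightarrow> ('p, 't) net \<Rightarrow> ('q \<Rightarrow> 'p) \<Rightarrow> ('u \<Rightarrow> 't) \<Rightarrow> bool" where
  "initial_hom N1 N2 lp lt \<longleftrightarrow>
     homomorphism N1 N2 lp lt \<and> image_mset lp (init N1) = init N2"

definition branching_process ::
  "('p, 't) net \<Rightarrow> ('q, 'u) net \<Rightarrow> ('q \<Rightarrow> 'p) \<Rightarrow> ('u \<Rightarrow> 't) \<Rightarrow> bool" where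
  "branching_process N NU lp lt \<longleftrightarrow>
     occurrence_net NU \<and> initial_hom NU N lp lt
     \<and> (\<forall>t1 \<in> trans NU. \<forall>t2 \<in> trans NU.
           pre NU t1 = pre NU t2 \<and> lt t1 = lt t2 \<longrightarrow> t1 = t2)"

text \<open>A Petri game: underlying net N with places PS \<union> PE (system / environment places)
  and bad markings B.\<close>

definition petri_game ::
  "('p, 't) net \<Rightarrow> 'p set \<Rightarrow> 'p set \<Rightarrow> 'p multiset set \<Rightarrow> bool" where
  "petri_game N PS PE B \<longleftrightarrow>
     wf_net N \<and> finite_net N \<and> PS \<inter> PE = {} \<and> places N = PS \<union> PE"

definition purely_env :: "('p, 't) net \<Rightarrow> 'p set \<Rightarrow> 't \<Rightarrow> bool" where
  "purely_env N PE t \<longleftrightarrow> set_mset (pre N t) \<subseteq> PE"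

definition system_trans :: "('p, 't) net \<Rightarrow> 'p set \<Rightarrow> 't \<Rightarrow> bool" where
  "system_trans N PE t \<longleftrightarrow> t \<in> trans N \<and> \<not> purely_env N PE t"

definition one_system_player :: "('p, 't) net \<Rightarrow> 'p set \<Rightarrow> bool" where
  "one_system_player N PS \<longleftrightarrow> (\<forall>M \<in> reach N. size (filter_mset (\<lambda>p. p \<in> PS) M) = 1)"

definition sys_place :: "'p set \<Rightarrow> 'p multiset \<Rightarrow> 'p" where
  "sys_place PS M = (THE p. p \<in> PS \<and> p \<in># M)"

definition sys_post :: "('p, 't) net \<Rightarrow> 'p set \<Rightarrow> 'p multiset \<Rightarrow> 't set" where
  "sys_post N PS M = {t \<in> trans N. sys_place PS M \<in># pre N t}"

definition pairwise_concurrent :: "('q, 'u) net \<Rightarrow> 'q set \<Rightarrow> bool" where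
  "pairwise_concurrent NS S \<longleftrightarrow>
     S \<subseteq> places NS \<and> (\<forall>x \<in> S. \<forall>y \<in> S. x \<noteq> y \<longrightarrow> concurrent NS (Inl x) (Inl y))"

definition winning_da_strategy ::
  "('p, 't) net \<Rightarrow> 'p set \<Rightarrow> 'p set \<Rightarrow> 'p multiset set
   \<Rightarrow> ('q, 'u) net \<Rightarrow> ('q \<Rightarrow> 'p) \<Rightarrow> ('u \<Rightarrow> 't) \<Rightarrow> bool" where
  "winning_da_strategy N PS PE B NS lp lt \<longleftrightarrow>
     branching_process N NS lp lt
     \<and> \<comment> \<open>justified refusal\<close>
       (\<forall>S t. finite S \<and> pairwise_concurrent NS S \<and> t \<in> trans N
           \<and> image_mset lp (mset_set S) = pre N t
           \<and> \<not> (\<exists>u \<in> trans NS. lt u = t \<and> pre NS u = mset_set S)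
           \<longrightarrow> (\<exists>s \<in> S. lp s \<in> PS \<and> t \<notin> lt ` {u \<in> trans NS. s \<in># pre NS u}))
     \<and> \<comment> \<open>safety\<close>
       (\<forall>M \<in> reach NS. image_mset lp M \<notin> B)
     \<and> \<comment> \<open>determinism\<close>
       (\<forall>s \<in> places NS. lp s \<in> PS \<longrightarrow> (\<forall>M \<in> reach NS. s \<in># M \<longrightarrow>
          (\<forall>u1 u2. u1 \<in> trans NS \<and> s \<in># pre NS u1 \<and> enabled NS u1 M
                 \<and> u2 \<in> trans NS \<and> s \<in># pre NS u2 \<and> enabled NS u2 M \<longrightarrow> u1 = u2)))
     \<and> \<comment> \<open>deadlock avoidance\<close>
       (\<forall>M \<in> reach NS. (\<exists>t. enabled N t (image_mset lp M)) \<longrightarrow> (\<exists>u. enabled NS u M))"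

text \<open>Strategies are vertex-labelled trees; since children of a node carry pairwise distinct
  labels, a node is identified with the (nonempty) list of labels from the root to it.\<close>

definition graph_strategy ::
  "'v set \<Rightarrow> 'v set \<Rightarrow> 'v \<Rightarrow> ('v \<times> 'v) set \<Rightarrow> 'v list set \<Rightarrow> bool" where
  "graph_strategy V0 V1 I E Tr \<longleftrightarrow>
     [I] \<in> Tr
     \<and> (\<forall>xs \<in> Tr. xs \<noteq> [] \<and> hd xs = I)
     \<and> (\<forall>xs v. xs \<noteq> [] \<and> xs @ [v] \<in> Tr \<longrightarrow> xs \<in> Tr \<and> (last xs, v) \<in> E)
     \<and> (\<forall>xs \<in> Tr. last xs \<in> V1 \<longrightarrow> (\<forall>w. (last xs, w) \<in> E \<longrightarrow> xs @ [w] \<in> Tr))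
     \<and> (\<forall>xs \<in> Tr. last xs \<in> V0 \<and> (\<exists>w. (last xs, w) \<in> E) \<longrightarrow> (\<exists>!w. xs @ [w] \<in> Tr))"

definition finite_play :: "'v \<Rightarrow> ('v \<times> 'v) set \<Rightarrow> 'v list \<Rightarrow> bool" where
  "finite_play I E xs \<longleftrightarrow> xs \<noteq> [] \<and> hd xs = I
     \<and> (\<forall>i. Suc i < length xs \<longrightarrow> (xs ! i, xs ! Suc i) \<in> E)
     \<and> \<not> (\<exists>w. (last xs, w) \<in> E)"

definition infinite_play :: "'v \<Rightarrow> ('v \<times> 'v) set \<Rightarrow> (nat \<Rightarrow> 'v) \<Rightarrow> bool" where
  "infinite_play I E f \<longleftrightarrow> f 0 = I \<and> (\<forall>i. (f i, f (Suc i)) \<in> E)"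

definition winning_graph_strategy ::
  "'v set \<Rightarrow> 'v set \<Rightarrow> 'v \<Rightarrow> ('v \<times> 'v) set \<Rightarrow> 'v set \<Rightarrow> 'v list set \<Rightarrow> bool" where
  "winning_graph_strategy V0 V1 I E X Tr \<longleftrightarrow>
     graph_strategy V0 V1 I E Tr
     \<and> (\<forall>xs \<in> Tr. \<not> (\<exists>w. xs @ [w] \<in> Tr) \<longrightarrow> finite_play I E xs \<and> set xs \<inter> X = {})
     \<and> (\<forall>f. (\<forall>n. map f [0..<Suc n] \<in> Tr) \<longrightarrow> infinite_play I E f \<and> (\<forall>i. f i \<notin> X))"

text \<open>Vertices are pairs (M, c) where c = None stands for \<top> and c = Some C for a set C
  of transitions.\<close>

type_synonym ('p, 't) gvertex = "'p multiset \<times> 't set option"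

definition gV0 :: "('p, 't) net \<Rightarrow> ('p, 't) gvertex set" where
  "gV0 N = {(M, None) | M. M \<in> reach N}"

definition gV1 :: "('p, 't) net \<Rightarrow> 'p set \<Rightarrow> ('p, 't) gvertex set" where
  "gV1 N PS = {(M, Some c) | M c. M \<in> reach N \<and> c \<subseteq> sys_post N PS M}"

definition gI :: "('p, 't) net \<Rightarrow> ('p, 't) gvertex" where
  "gI N = (init N, None)"

definition gE :: "('p, 't) net \<Rightarrow> 'p set \<Rightarrow> 'p set
                  \<Rightarrow> (('p, 't) gvertex \<times> ('p, 't) gvertex) set" where
  "gE N PS PE =
     {((M, None), (M, Some c)) | M c. M \<in> reach N \<and> c \<subseteq> sys_post N PS M}
   \<union> {((M, Some c), (M', Some c)) | M M' c. (M, Some c) \<in> gV1 N PS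
        \<and> (\<exists>t. purely_env N PE t \<and> enabled N t M \<and> M' = fire N t M)}
   \<union> {((M, Some c), (M', None)) | M M' c. (M, Some c) \<in> gV1 N PS
        \<and> (\<exists>t \<in> c. system_trans N PE t \<and> enabled N t M \<and> M' = fire N t M)}"

definition gX :: "('p, 't) net \<Rightarrow> 'p set \<Rightarrow> 'p set \<Rightarrow> 'p multiset set
                  \<Rightarrow> ('p, 't) gvertex set" where
  "gX N PS PE B =
     {(M, Some c) | M c. (M, Some c) \<in> gV1 N PS \<and>
        (M \<in> B
         \<or> (\<exists>t1 \<in> c. \<exists>t2 \<in> c. t1 \<noteq> t2 \<and> enabled N t1 M \<and> enabled N t2 M)
         \<or> (\<exists>t \<in> c. enabled N t M \<and> (\<exists>p. 0 < count (pre N t) p \<and> count (pre N t) p < count M p))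
         \<or> ((\<exists>t. enabled N t M) \<and> (\<forall>t. enabled N t M \<longrightarrow> system_trans N PE t)
             \<and> \<not> (\<exists>t \<in> c. enabled N t M)))}"

end

theory Submission
  imports Defs
begin

text \<open>Player 0 simulates the Petri game strategy in the graph game. Every vertex reached is the
  projection of a reachable marking \<open>K\<close> of the strategy, and at a Player 0 vertex Player 0 commits
  exactly to the transitions that the strategy lets the unique system token of \<open>K\<close> take part in.
  Reachable markings of an occurrence net are cuts, so justified refusal allows every environment
  move and every committed system move of the graph game to be replayed in the strategy; safety,
  determinism and deadlock avoidance of the strategy then rule out the bad vertices. This invariant
  yields a positional winning strategy of Player 0.\<close>

lemma mset_set_set_mset_eq:
  assumes "\<And>x. count A x \<le> 1" shows "mset_set (set_mset A) = A"
proof (rule multiset_eqI)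
  fix x
  show "count (mset_set (set_mset A)) x = count A x"
  proof (cases "x \<in># A")
    case True
    then have "0 < count A x" by simp
    with assms[of x] have "count A x = 1" by linarith
    with True show ?thesis by (simp add: count_mset_set)
  next
    case False
    then show ?thesis by (simp add: count_mset_set not_in_iff)
  qed
qed

lemma subseteq_image_msetE:
  assumes "A \<subseteq># image_mset f K"
  obtains B where "B \<subseteq># K" "image_mset f B = A"
proof -
  have "image_mset f K = A + (image_mset f K - A)" using assms by simp
  from image_mset_eq_plusD[OF this] obtain B C where "K = B + C" "A = image_mset f B" by blast
  then show thesis using that by (metis mset_subset_eq_add_left)
qed

lemma subseteq_image_mset_two_preimages:
  assumes K: "\<And>x. count K x \<le> 1" and A: "A \<subseteq># image_mset f K"
    and p: "0 < count A p" "count A p < count (image_mset f K) p"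
  obtains B1 B2 where "B1 \<subseteq># K" "B2 \<subseteq># K" "image_mset f B1 = A" "image_mset f B2 = A" "B1 \<noteq> B2"
proof -
  obtain B where B: "B \<subseteq># K" "image_mset f B = A" using A by (rule subseteq_image_msetE)
  obtain q where q: "q \<in># B" "f q = p" using p(1) B(2) by (auto simp: count_greater_zero_iff)
  have "0 < count (image_mset f (K - B)) p" using p(2) B by (simp add: image_mset_Diff)
  then obtain q' where q': "q' \<in># K - B" "f q' = p" by (auto simp: count_greater_zero_iff)
  have "q' \<notin># B" using q'(1) K[of q'] by (simp add: in_diff_count not_in_iff)
  define B' where "B' = add_mset q' (B - {#q#})"
  have "B + {#q'#} \<subseteq># B + (K - B)"
    using q'(1) by (simp add: subset_mset.add_left_mono)
  then have "add_mset q' B \<subseteq># K" using B(1) by simp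
  moreover have "B' \<subseteq># add_mset q' B" unfolding B'_def by simp
  ultimately have "B' \<subseteq># K" by (rule subset_mset.order_trans[rotated])
  moreover have "image_mset f B' = A"
    unfolding B'_def using p(1) q q' B(2) by (simp add: image_mset_Diff insert_DiffM)
  moreover have "B' \<noteq> B" using \<open>q' \<notin># B\<close> unfolding B'_def by (metis union_single_eq_member)
  ultimately show thesis using that B by blast
qed

lemma set_mset_fire:
  assumes "pre N u \<subseteq># K" "\<And>p. count K p \<le> 1"
  shows "set_mset (fire N u K) = (set_mset K - set_mset (pre N u)) \<union> set_mset (post N u)"
proof -
  have count_fire: "count (fire N u K) p = count K p - count (pre N u) p + count (post N u) p" for p
    unfolding fire_def by simp
  have "p \<in># fire N u K \<longleftrightarrow> (p \<in># K \<and> p \<notin># pre N u) \<or> p \<in># post N u" for p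
    using mset_subset_eq_count[OF assms(1), of p] assms(2)[of p]
    unfolding count_greater_zero_iff[symmetric] count_fire[of p] by presburger
  then show ?thesis by auto
qed

lemma enabled_image_mset:
  assumes "homomorphism N1 N2 lp lt" "enabled N1 u K"
  shows "enabled N2 (lt u) (image_mset lp K)"
  using assms unfolding homomorphism_def enabled_def
  by (metis image_mset_subseteq_mono image_subset_iff)

lemma fire_image_mset:
  assumes "homomorphism N1 N2 lp lt" "enabled N1 u K"
  shows "image_mset lp (fire N1 u K) = fire N2 (lt u) (image_mset lp K)"
proof -
  have u: "u \<in> trans N1" "pre N1 u \<subseteq># K" using assms(2) unfolding enabled_def by auto
  then have "image_mset lp (K - pre N1 u) = image_mset lp K - image_mset lp (pre N1 u)"
    by (simp add: image_mset_Diff)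
  then show ?thesis
    using assms(1) u(1) unfolding fire_def image_mset_union homomorphism_def by simp
qed

lemma reach_image_mset:
  assumes "initial_hom N1 N2 lp lt" "K \<in> reach N1"
  shows "image_mset lp K \<in> reach N2"
  using assms(2)
proof (induction rule: reach.induct)
  case init
  then show ?case using assms(1) reach.init unfolding initial_hom_def by metis
next
  case (step K u)
  then show ?case
    using assms(1) enabled_image_mset fire_image_mset reach.step unfolding initial_hom_def by metis
qed

section \<open>Occurrence nets\<close>

locale occ_net =
  fixes NS :: "('q, 'u) net"
  assumes occurrence_net: "occurrence_net NS"
begin

lemma wf_net: "wf_net NS"
  using occurrence_net unfolding occurrence_net_def by blast

lemma pre_nonempty: "u \<in> trans NS \<Longrightarrow> pre NS u \<noteq> {#}"
  using wf_net unfolding wf_net_def by blast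

lemma post_subset_places: "u \<in> trans NS \<Longrightarrow> set_mset (post NS u) \<subseteq> places NS"
  using wf_net unfolding wf_net_def by blast

lemma init_subset_places: "set_mset (init NS) \<subseteq> places NS"
  using wf_net unfolding wf_net_def by blast

lemma count_post_le_1: "u \<in> trans NS \<Longrightarrow> count (post NS u) p \<le> 1"
  using occurrence_net unfolding occurrence_net_def by blast

lemma count_init_le_1: "count (init NS) p \<le> 1"
  using occurrence_net unfolding occurrence_net_def by blast

lemma post_unique_producer:
  "u1 \<in> trans NS \<Longrightarrow> u2 \<in> trans NS \<Longrightarrow> p \<in># post NS u1 \<Longrightarrow> p \<in># post NS u2 \<Longrightarrow> u1 = u2"
  using occurrence_net post_subset_places unfolding occurrence_net_def by blast

lemma init_not_in_post:
  assumes "p \<in># init NS" "u \<in> trans NS" shows "p \<notin># post NS u"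
proof -
  have "set_mset (init NS) = {p \<in> places NS. \<not> (\<exists>t \<in> trans NS. p \<in># post NS t)}"
    using occurrence_net unfolding occurrence_net_def by blast
  with assms show ?thesis by blast
qed

lemma pre_not_in_post: "u \<in> trans NS \<Longrightarrow> p \<in># pre NS u \<Longrightarrow> p \<notin># post NS u"
proof
  assume "u \<in> trans NS" "p \<in># pre NS u" "p \<in># post NS u"
  then have "(Inl p, Inr u) \<in> flow_rel NS" "(Inr u, Inl p) \<in> flow_rel NS"
    unfolding flow_rel_def by auto
  moreover have "wf (flow_rel NS)"
    using occurrence_net unfolding occurrence_net_def by blast
  ultimately show False by (metis wf_asym)
qed

text \<open>\<open>cut_of K C\<close>: \<open>K\<close> is the marking reached by firing the configuration \<open>C\<close>.\<close>

definition produced :: "'u set \<Rightarrow> 'q set" where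
  "produced C = set_mset (init NS) \<union> (\<Union>u\<in>C. set_mset (post NS u))"

definition consumed :: "'u set \<Rightarrow> 'q set" where
  "consumed C = (\<Union>u\<in>C. set_mset (pre NS u))"

definition cut_of :: "'q multiset \<Rightarrow> 'u set \<Rightarrow> bool" where
  "cut_of K C \<longleftrightarrow> (\<forall>p. count K p \<le> 1) \<and> set_mset K = produced C - consumed C
     \<and> C \<subseteq> trans NS \<and> (\<forall>u\<in>C. set_mset (pre NS u) \<subseteq> produced C)
     \<and> (\<forall>u1\<in>C. \<forall>u2\<in>C. u1 \<noteq> u2 \<longrightarrow> set_mset (pre NS u1) \<inter> set_mset (pre NS u2) = {})"

lemma produced_insert: "produced (insert u C) = produced C \<union> set_mset (post NS u)"
  by (auto simp: produced_def)

lemma consumed_insert: "consumed (insert u C) = consumed C \<union> set_mset (pre NS u)"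
  by (auto simp: consumed_def)

lemma cut_ofD:
  assumes "cut_of K C"
  shows "count K p \<le> 1" "set_mset K = produced C - consumed C" "C \<subseteq> trans NS"
    "u \<in> C \<Longrightarrow> set_mset (pre NS u) \<subseteq> produced C"
    "u1 \<in> C \<Longrightarrow> u2 \<in> C \<Longrightarrow> u1 \<noteq> u2 \<Longrightarrow> set_mset (pre NS u1) \<inter> set_mset (pre NS u2) = {}"
  using assms unfolding cut_of_def by blast+

lemma cut_of_backward_closed:
  assumes "cut_of K C" "(x, y) \<in> (flow_rel NS)\<^sup>*" "y \<in> Inr ` C \<union> Inl ` produced C"
  shows "x \<in> Inr ` C \<union> Inl ` produced C"
  using assms(2,3)
proof (induction rule: converse_rtrancl_induct)
  case (step x z)
  from step.hyps(1) consider
      (consume) p u where "x = Inl p" "z = Inr u" "u \<in> trans NS" "p \<in># pre NS u"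
    | (produce) p u where "x = Inr u" "z = Inl p" "u \<in> trans NS" "p \<in># post NS u"
    unfolding flow_rel_def by blast
  then show ?case
  proof cases
    case consume
    with step.IH[OF step.prems] have "u \<in> C" by auto
    with cut_ofD(4)[OF assms(1)] consume show ?thesis by auto
  next
    case produce
    with step.IH[OF step.prems] have "p \<in> produced C" by auto
    moreover have "p \<notin># init NS" using produce init_not_in_post by blast
    ultimately obtain u' where u': "u' \<in> C" "p \<in># post NS u'"
      unfolding produced_def by blast
    moreover from this have "u' \<in> trans NS" using cut_ofD(3)[OF assms(1)] by blast
    ultimately have "u = u'" using produce post_unique_producer by blast
    with u' produce show ?thesis by auto
  qed
qed simp

lemma cut_of_init: "cut_of (init NS) {}"
  unfolding cut_of_def produced_def consumed_def using count_init_le_1 by auto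

lemma enabled_not_in_cut_of:
  assumes "cut_of K C" "enabled NS u K"
  shows "u \<notin> C"
proof
  assume "u \<in> C"
  have "u \<in> trans NS" "pre NS u \<subseteq># K" using assms(2) unfolding enabled_def by auto
  then obtain p where "p \<in># pre NS u" "p \<in># K"
    using pre_nonempty by (meson multiset_nonemptyE mset_subset_eqD)
  with \<open>u \<in> C\<close> cut_ofD(2)[OF assms(1)] show False unfolding consumed_def by auto
qed

lemma post_not_produced:
  assumes "C \<subseteq> trans NS" "u \<in> trans NS" "u \<notin> C" "p \<in># post NS u"
  shows "p \<notin> produced C"
  using assms init_not_in_post post_unique_producer unfolding produced_def by blast

lemma cut_of_fire:
  assumes "cut_of K C" "enabled NS u K"
  shows "cut_of (fire NS u K) (insert u C)"
proof -
  have u: "u \<in> trans NS" and sub: "pre NS u \<subseteq># K" using assms(2) unfolding enabled_def by auto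
  note K1 = cut_ofD(1)[OF assms(1)] and K = cut_ofD(2)[OF assms(1)]
    and C = cut_ofD(3)[OF assms(1)] and closed = cut_ofD(4)[OF assms(1)]
    and disj = cut_ofD(5)[OF assms(1)]
  have preK: "set_mset (pre NS u) \<subseteq> set_mset K" using sub by (simp add: set_mset_mono)
  note fresh = post_not_produced[OF C u enabled_not_in_cut_of[OF assms]]
  have fresh_unconsumed: "p \<notin> consumed C" if "p \<in># post NS u" for p
    using fresh[OF that] closed unfolding consumed_def by blast
  have count_le_1: "count (fire NS u K) p \<le> 1" for p
  proof (cases "p \<in># post NS u")
    case True
    then have "p \<notin># K" using fresh K by auto
    then show ?thesis using count_post_le_1[OF u] by (simp add: fire_def not_in_iff)
  next
    case False
    then show ?thesis using K1[of p] by (simp add: fire_def not_in_iff)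
  qed
  have "set_mset (fire NS u K) = (set_mset K - set_mset (pre NS u)) \<union> set_mset (post NS u)"
    using sub K1 by (rule set_mset_fire)
  also have "\<dots> = produced (insert u C) - consumed (insert u C)"
    using K fresh_unconsumed pre_not_in_post[OF u] unfolding produced_insert consumed_insert
    by blast
  finally have set_fire: "set_mset (fire NS u K) = produced (insert u C) - consumed (insert u C)" .
  have closed_insert: "set_mset (pre NS v) \<subseteq> produced (insert u C)" if "v \<in> insert u C" for v
    using that closed preK K unfolding produced_insert by blast
  have "set_mset (pre NS u) \<inter> set_mset (pre NS v) = {}" if "v \<in> C" for v
    using that preK K unfolding consumed_def by blast
  then have disj_insert: "set_mset (pre NS u1) \<inter> set_mset (pre NS u2) = {}"
    if "u1 \<in> insert u C" "u2 \<in> insert u C" "u1 \<noteq> u2" for u1 u2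
    using that disj by blast
  show ?thesis
    using count_le_1 set_fire closed_insert disj_insert C u unfolding cut_of_def by blast
qed

lemma reach_cut_of: "K \<in> reach NS \<Longrightarrow> \<exists>C. cut_of K C"
  by (induction rule: reach.induct) (use cut_of_init cut_of_fire in blast)+

lemma count_reach_le_1: "K \<in> reach NS \<Longrightarrow> count K p \<le> 1"
  using reach_cut_of cut_ofD(1) by blast

lemma reach_subset_places:
  assumes "K \<in> reach NS" shows "set_mset K \<subseteq> places NS"
proof -
  obtain C where C: "cut_of K C" using reach_cut_of assms by blast
  then have "C \<subseteq> trans NS" by (rule cut_ofD)
  then have "produced C \<subseteq> places NS"
    using init_subset_places post_subset_places unfolding produced_def by blast
  with cut_ofD(2)[OF C] show ?thesis by blast
qed

lemma reach_concurrent: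
  assumes "K \<in> reach NS" "p \<in># K" "q \<in># K" "p \<noteq> q"
  shows "concurrent NS (Inl p) (Inl q)"
proof -
  obtain C where C: "cut_of K C" using reach_cut_of assms(1) by blast
  note K = cut_ofD(2)[OF C]
  let ?nodes = "Inr ` C \<union> Inl ` produced C"
  have in_nodes: "Inl p \<in> ?nodes" "Inl q \<in> ?nodes" using assms(2,3) K by auto
  have not_before: "\<not> causal_le NS (Inl a) (Inl b)" if ab: "a \<in># K" "Inl b \<in> ?nodes" "a \<noteq> b" for a b
  proof
    assume "causal_le NS (Inl a) (Inl b)"
    then obtain z where z: "(Inl a, z) \<in> flow_rel NS" "(z, Inl b) \<in> (flow_rel NS)\<^sup>*"
      using ab(3) unfolding causal_le_def by (metis converse_rtranclE sum.inject(1))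
    then obtain u where "z = Inr u" "a \<in># pre NS u" unfolding flow_rel_def by blast
    with cut_of_backward_closed[OF C z(2) ab(2)] have "a \<in> consumed C"
      unfolding consumed_def by auto
    with ab(1) K show False by auto
  qed
  have "\<not> conflict NS (Inl p) (Inl q)"
  proof
    assume "conflict NS (Inl p) (Inl q)"
    then obtain r t1 t2 where t: "t1 \<noteq> t2" "r \<in># pre NS t1" "r \<in># pre NS t2"
      "causal_le NS (Inr t1) (Inl p)" "causal_le NS (Inr t2) (Inl q)"
      unfolding conflict_def by blast
    then have "Inr t1 \<in> ?nodes" "Inr t2 \<in> ?nodes"
      using cut_of_backward_closed[OF C _ in_nodes(1)] cut_of_backward_closed[OF C _ in_nodes(2)]
      unfolding causal_le_def by blast+
    then have "t1 \<in> C" "t2 \<in> C" by auto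
    with t cut_ofD(5)[OF C] show False by blast
  qed
  then show ?thesis
    unfolding concurrent_def
    using not_before[OF assms(2) in_nodes(2) assms(4)] not_before[OF assms(3) in_nodes(1)] assms(4)
    by auto
qed

lemma pairwise_concurrent_reach:
  "K \<in> reach NS \<Longrightarrow> pairwise_concurrent NS (set_mset K)"
  unfolding pairwise_concurrent_def using reach_subset_places reach_concurrent by blast

end

section \<open>Safety games\<close>

definition paths :: "'v \<Rightarrow> ('v \<Rightarrow> 'v \<Rightarrow> bool) \<Rightarrow> 'v list set" where
  "paths I move = {xs. xs \<noteq> [] \<and> hd xs = I \<and> successively move xs}"

lemma paths_snoc:
  "xs \<noteq> [] \<Longrightarrow> xs @ [w] \<in> paths I move \<longleftrightarrow> xs \<in> paths I move \<and> move (last xs) w"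
  by (auto simp: paths_def successively_append_iff)

lemma paths_nth:
  "xs \<in> paths I move \<Longrightarrow> Suc i < length xs \<Longrightarrow> move (xs ! i) (xs ! Suc i)"
  unfolding paths_def successively_conv_nth by blast

lemma paths_invariant:
  assumes "Inv I" "\<And>v w. Inv v \<Longrightarrow> move v w \<Longrightarrow> Inv w" "xs \<in> paths I move" "x \<in> set xs"
  shows "Inv x"
proof -
  have "Inv (xs ! i)" if "i < length xs" for i
    using that
  proof (induction i)
    case 0
    from assms(3) have "xs \<noteq> []" "hd xs = I" by (simp_all add: paths_def)
    with assms(1) show ?case by (simp add: hd_conv_nth)
  next
    case (Suc i)
    then show ?case using assms(2) paths_nth[OF assms(3) Suc.prems] by simp
  qed
  then show ?thesis using assms(4) by (metis in_set_conv_nth)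
qed

lemma winning_graph_strategy_paths:
  assumes Inv_init: "Inv I" and Inv_move: "\<And>v w. Inv v \<Longrightarrow> move v w \<Longrightarrow> Inv w"
    and Inv_safe: "\<And>v. Inv v \<Longrightarrow> v \<notin> X"
    and move_edge: "\<And>v w. move v w \<Longrightarrow> (v, w) \<in> E"
    and move_total: "\<And>v w. Inv v \<Longrightarrow> (v, w) \<in> E \<Longrightarrow> \<exists>w'. move v w'"
    and move_V1: "\<And>v w. Inv v \<Longrightarrow> v \<in> V1 \<Longrightarrow> (v, w) \<in> E \<Longrightarrow> move v w"
    and move_V0: "\<And>v w. Inv v \<Longrightarrow> v \<in> V0 \<Longrightarrow> (v, w) \<in> E \<Longrightarrow> \<exists>!w'. move v w'"
  shows "winning_graph_strategy V0 V1 I E X (paths I move)"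
proof -
  let ?Tr = "paths I move"
  note snoc = paths_snoc[where I = I and move = move]
    and nth = paths_nth[where I = I and move = move]
  have nonempty: "xs \<noteq> []" if "xs \<in> ?Tr" for xs
    using that unfolding paths_def by blast
  have Inv_last: "Inv (last xs)" if "xs \<in> ?Tr" for xs
    using paths_invariant[where Inv = Inv, OF Inv_init Inv_move that last_in_set[OF nonempty[OF that]]] .
  have "graph_strategy V0 V1 I E ?Tr"
    unfolding graph_strategy_def
  proof (intro conjI)
    show "\<forall>xs v. xs \<noteq> [] \<and> xs @ [v] \<in> ?Tr \<longrightarrow> xs \<in> ?Tr \<and> (last xs, v) \<in> E"
    proof (intro allI impI)
      fix xs v assume "xs \<noteq> [] \<and> xs @ [v] \<in> ?Tr"
      then have "xs \<in> ?Tr" "move (last xs) v" using snoc by blast+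
      then show "xs \<in> ?Tr \<and> (last xs, v) \<in> E" using move_edge by blast
    qed
    show "\<forall>xs \<in> ?Tr. last xs \<in> V1 \<longrightarrow> (\<forall>w. (last xs, w) \<in> E \<longrightarrow> xs @ [w] \<in> ?Tr)"
    proof (intro ballI impI allI)
      fix xs w assume xs: "xs \<in> ?Tr" and "last xs \<in> V1" "(last xs, w) \<in> E"
      then have "move (last xs) w" using move_V1 Inv_last[OF xs] by blast
      then show "xs @ [w] \<in> ?Tr" using snoc[OF nonempty[OF xs]] xs by blast
    qed
    show "\<forall>xs \<in> ?Tr. last xs \<in> V0 \<and> (\<exists>w. (last xs, w) \<in> E) \<longrightarrow> (\<exists>!w. xs @ [w] \<in> ?Tr)"
    proof (intro ballI impI)
      fix xs assume xs: "xs \<in> ?Tr" and "last xs \<in> V0 \<and> (\<exists>w. (last xs, w) \<in> E)"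
      then have "\<exists>!w. move (last xs) w" using move_V0 Inv_last[OF xs] by blast
      then show "\<exists>!w. xs @ [w] \<in> ?Tr" using snoc[OF nonempty[OF xs]] xs by simp
    qed
    show "[I] \<in> ?Tr" by (simp add: paths_def)
    show "\<forall>xs \<in> ?Tr. xs \<noteq> [] \<and> hd xs = I" by (simp add: paths_def)
  qed
  moreover have "finite_play I E xs \<and> set xs \<inter> X = {}"
    if xs: "xs \<in> ?Tr" and leaf: "\<not> (\<exists>w. xs @ [w] \<in> ?Tr)" for xs
  proof -
    have "\<not> (\<exists>w. (last xs, w) \<in> E)"
    proof
      assume "\<exists>w. (last xs, w) \<in> E"
      then obtain w where "move (last xs) w" using move_total Inv_last[OF xs] by blast
      then show False using leaf xs snoc[OF nonempty[OF xs]] by blast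
    qed
    moreover have "x \<notin> X" if "x \<in> set xs" for x
      using paths_invariant[where Inv = Inv, OF Inv_init Inv_move xs that] by (rule Inv_safe)
    moreover have "(xs ! i, xs ! Suc i) \<in> E" if "Suc i < length xs" for i
      using nth[OF xs that] by (rule move_edge)
    moreover have "hd xs = I" using xs unfolding paths_def by blast
    ultimately show ?thesis using nonempty[OF xs] unfolding finite_play_def by blast
  qed
  moreover have "infinite_play I E f \<and> (\<forall>i. f i \<notin> X)"
    if prefixes: "\<forall>n. map f [0..<Suc n] \<in> ?Tr" for f
  proof -
    have "f 0 = I" using prefixes[rule_format, of 0] by (simp add: paths_def)
    moreover have "(f i, f (Suc i)) \<in> E" for i
      using move_edge nth[OF prefixes[rule_format, of "Suc i"], of i] by (simp del: upt_Suc)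
    moreover have "f i \<notin> X" for i
      using paths_invariant[where Inv = Inv, OF Inv_init Inv_move prefixes[rule_format, of i]] Inv_safe
      by (simp del: upt_Suc)
    ultimately show ?thesis unfolding infinite_play_def by blast
  qed
  ultimately show ?thesis unfolding winning_graph_strategy_def by blast
qed

lemma winning_graph_strategy_if_safe_invariant:
  assumes disjoint: "V0 \<inter> V1 = {}"
    and Inv_init: "Inv I"
    and Inv_safe: "\<And>v. Inv v \<Longrightarrow> v \<notin> X"
    and player0_move: "\<And>v w. Inv v \<Longrightarrow> v \<in> V0 \<Longrightarrow> (v, w) \<in> E \<Longrightarrow> \<exists>w'. (v, w') \<in> E \<and> Inv w'"
    and Inv_other_move: "\<And>v w. Inv v \<Longrightarrow> v \<notin> V0 \<Longrightarrow> (v, w) \<in> E \<Longrightarrow> Inv w"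
  shows "\<exists>Tr. winning_graph_strategy V0 V1 I E X Tr"
proof -
  define \<sigma> where "\<sigma> v = (SOME w. (v, w) \<in> E \<and> Inv w)" for v
  define move where "move v w \<longleftrightarrow> (v, w) \<in> E \<and> (v \<in> V0 \<longrightarrow> w = \<sigma> v)" for v w
  have \<sigma>: "(v, \<sigma> v) \<in> E \<and> Inv (\<sigma> v)" if "Inv v" "v \<in> V0" "(v, w) \<in> E" for v w
    unfolding \<sigma>_def using someI_ex[OF player0_move[OF that]] .
  have "winning_graph_strategy V0 V1 I E X (paths I move)"
  proof (rule winning_graph_strategy_paths[where Inv = Inv])
    show "Inv w" if "Inv v" "move v w" for v w
      using that \<sigma> Inv_other_move unfolding move_def by blast
    show "\<exists>w'. move v w'" if "Inv v" "(v, w) \<in> E" for v w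
      using that \<sigma> unfolding move_def by (cases "v \<in> V0") blast+
    show "move v w" if "v \<in> V1" "(v, w) \<in> E" for v w
      using that disjoint unfolding move_def by blast
    show "\<exists>!w'. move v w'" if "Inv v" "v \<in> V0" "(v, w) \<in> E" for v w
      using \<sigma>[OF that] that(2) unfolding move_def by blast
  qed (simp_all add: move_def Inv_init Inv_safe)
  then show ?thesis by blast
qed

section \<open>Simulating a strategy of the Petri game\<close>

locale petri_game_strategy =
  fixes N :: "('p, 't) net" and PS PE :: "'p set" and B :: "'p multiset set"
    and NS :: "('q, 'u) net" and lp :: "'q \<Rightarrow> 'p" and lt :: "'u \<Rightarrow> 't"
  assumes game: "petri_game N PS PE B"
    and one_system_player: "one_system_player N PS"
    and strategy: "winning_da_strategy N PS PE B NS lp lt"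
begin

lemma branching_process: "branching_process N NS lp lt"
  using strategy unfolding winning_da_strategy_def by blast

sublocale occ_net NS
  using branching_process unfolding branching_process_def by unfold_locales blast

lemma initial_hom: "initial_hom NS N lp lt"
  using branching_process unfolding branching_process_def by blast

lemma homomorphism: "homomorphism NS N lp lt"
  using initial_hom unfolding initial_hom_def by blast

lemma trans_image: "u \<in> trans NS \<Longrightarrow> lt u \<in> trans N"
  using homomorphism unfolding homomorphism_def by blast

lemma pre_image: "u \<in> trans NS \<Longrightarrow> image_mset lp (pre NS u) = pre N (lt u)"
  using homomorphism unfolding homomorphism_def by blast

lemma in_pre_image: "u \<in> trans NS \<Longrightarrow> q \<in># pre NS u \<Longrightarrow> lp q \<in># pre N (lt u)"
  by (simp flip: pre_image)

lemma reach_image: "K \<in> reach NS \<Longrightarrow> image_mset lp K \<in> reach N"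
  using reach_image_mset[OF initial_hom] .

lemma justified_refusal:
  "finite S \<Longrightarrow> pairwise_concurrent NS S \<Longrightarrow> t \<in> trans N \<Longrightarrow> image_mset lp (mset_set S) = pre N t
   \<Longrightarrow> \<not> (\<exists>u \<in> trans NS. lt u = t \<and> pre NS u = mset_set S)
   \<Longrightarrow> \<exists>s \<in> S. lp s \<in> PS \<and> t \<notin> lt ` {u \<in> trans NS. s \<in># pre NS u}"
  using strategy unfolding winning_da_strategy_def by blast

lemma safety: "K \<in> reach NS \<Longrightarrow> image_mset lp K \<notin> B"
  using strategy unfolding winning_da_strategy_def by blast

lemma determinism:
  "s \<in> places NS \<Longrightarrow> lp s \<in> PS \<Longrightarrow> K \<in> reach NS \<Longrightarrow> s \<in># K
   \<Longrightarrow> u1 \<in> trans NS \<Longrightarrow> s \<in># pre NS u1 \<Longrightarrow> enabled NS u1 K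
   \<Longrightarrow> u2 \<in> trans NS \<Longrightarrow> s \<in># pre NS u2 \<Longrightarrow> enabled NS u2 K \<Longrightarrow> u1 = u2"
  using strategy unfolding winning_da_strategy_def by blast

lemma deadlock_avoidance:
  "K \<in> reach NS \<Longrightarrow> enabled N t (image_mset lp K) \<Longrightarrow> \<exists>u. enabled NS u K"
  using strategy unfolding winning_da_strategy_def by blast

lemma PS_PE_disjoint: "PS \<inter> PE = {}"
  using game unfolding petri_game_def by blast

lemma pre_subset_PS_PE: "t \<in> trans N \<Longrightarrow> set_mset (pre N t) \<subseteq> PS \<union> PE"
  using game unfolding petri_game_def wf_net_def by blast

definition sys_token :: "'q multiset \<Rightarrow> 'q" where
  "sys_token K = (THE q. q \<in># K \<and> lp q \<in> PS)"

lemma sys_token_iff: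
  assumes "K \<in> reach NS"
  shows "q \<in># K \<and> lp q \<in> PS \<longleftrightarrow> q = sys_token K"
proof -
  have "size (filter_mset (\<lambda>p. p \<in> PS) (image_mset lp K)) = 1"
    using one_system_player reach_image[OF assms] unfolding one_system_player_def by blast
  then have "size (filter_mset (\<lambda>q. lp q \<in> PS) K) = 1"
    by (simp add: filter_mset_image_mset)
  then obtain s where "filter_mset (\<lambda>q. lp q \<in> PS) K = {#s#}"
    using size_1_singleton_mset by blast
  then have "{q \<in> set_mset K. lp q \<in> PS} = {s}"
    by (metis set_mset_filter set_mset_single)
  then have s: "q \<in># K \<and> lp q \<in> PS \<longleftrightarrow> q = s" for q
    by blast
  then have "sys_token K = s" unfolding sys_token_def by blast
  with s show ?thesis by blast
qed

lemma sys_token: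
  assumes "K \<in> reach NS"
  shows sys_token_in: "sys_token K \<in># K" and sys_token_PS: "lp (sys_token K) \<in> PS"
    and sys_token_unique: "q \<in># K \<Longrightarrow> lp q \<in> PS \<Longrightarrow> q = sys_token K"
  using sys_token_iff[OF assms] by blast+

lemma sys_place_image:
  assumes "K \<in> reach NS"
  shows "sys_place PS (image_mset lp K) = lp (sys_token K)"
  unfolding sys_place_def
proof (rule the_equality)
  show "lp (sys_token K) \<in> PS \<and> lp (sys_token K) \<in># image_mset lp K"
    using sys_token_in[OF assms] sys_token_PS[OF assms] by simp
next
  fix p assume "p \<in> PS \<and> p \<in># image_mset lp K"
  then obtain q where "q \<in># K" "lp q = p" "p \<in> PS" by auto
  then show "p = lp (sys_token K)" using sys_token_unique[OF assms] by blast
qed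

definition strategy_choice :: "'q multiset \<Rightarrow> 't set" where
  "strategy_choice K = lt ` {u \<in> trans NS. sys_token K \<in># pre NS u}"

lemma strategy_choice_subset_sys_post:
  assumes "K \<in> reach NS"
  shows "strategy_choice K \<subseteq> sys_post N PS (image_mset lp K)"
proof
  fix t assume "t \<in> strategy_choice K"
  then obtain u where u: "u \<in> trans NS" "sys_token K \<in># pre NS u" "t = lt u"
    unfolding strategy_choice_def by blast
  then have "lp (sys_token K) \<in># pre N t" using in_pre_image[OF u(1,2)] by simp
  then show "t \<in> sys_post N PS (image_mset lp K)"
    unfolding sys_post_def sys_place_image[OF assms] using trans_image[OF u(1)] u(3) by simp
qed

lemma sys_token_in_lift:
  assumes K: "K \<in> reach NS" and t: "t \<in> strategy_choice K"
    and Bm: "Bm \<subseteq># K" "image_mset lp Bm = pre N t"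
  shows "sys_token K \<in># Bm"
proof -
  obtain u where u: "u \<in> trans NS" "sys_token K \<in># pre NS u" "t = lt u"
    using t unfolding strategy_choice_def by blast
  then have "lp (sys_token K) \<in># image_mset lp Bm" using in_pre_image[OF u(1,2)] Bm(2) by simp
  then obtain q where "q \<in># Bm" "lp q = lp (sys_token K)" by auto
  moreover from this have "q \<in># K" using Bm(1) by (meson mset_subset_eqD)
  ultimately have "q = sys_token K" using sys_token_unique[OF K] sys_token_PS[OF K] by metis
  with \<open>q \<in># Bm\<close> show ?thesis by simp
qed

text \<open>Reachable markings of the strategy are cuts, so every lifting of a precondition is a set of
  concurrent places; justified refusal then blames a system place, which can only be the system
  token, and it does not refuse the transitions it allows.\<close>

lemma transition_lifts:
  assumes K: "K \<in> reach NS" and Bm: "Bm \<subseteq># K" "image_mset lp Bm = pre N t"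
    and t: "t \<in> trans N" and allowed: "purely_env N PE t \<or> t \<in> strategy_choice K"
  shows "\<exists>u \<in> trans NS. lt u = t \<and> pre NS u = Bm"
proof (rule ccontr)
  assume no_lift: "\<not> ?thesis"
  have "count Bm p \<le> 1" for p
    using count_reach_le_1[OF K, of p] mset_subset_eq_count[OF Bm(1), of p] by linarith
  then have Bm_set: "mset_set (set_mset Bm) = Bm" by (rule mset_set_set_mset_eq)
  have "pairwise_concurrent NS (set_mset Bm)"
    using pairwise_concurrent_reach[OF K] set_mset_mono[OF Bm(1)]
    unfolding pairwise_concurrent_def by blast
  moreover have "image_mset lp (mset_set (set_mset Bm)) = pre N t" using Bm(2) Bm_set by simp
  moreover have "\<not> (\<exists>u \<in> trans NS. lt u = t \<and> pre NS u = mset_set (set_mset Bm))"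
    using no_lift Bm_set by simp
  ultimately obtain s where s: "s \<in># Bm" "lp s \<in> PS" "t \<notin> lt ` {u \<in> trans NS. s \<in># pre NS u}"
    using justified_refusal[OF finite_set_mset _ t] by blast
  have "s \<in># K" using s(1) Bm(1) by (meson mset_subset_eqD)
  then have "s = sys_token K" using sys_token_unique[OF K _ s(2)] by blast
  from allowed show False
  proof
    assume "purely_env N PE t"
    moreover have "lp s \<in># pre N t" using s(1) Bm(2)[symmetric] by simp
    ultimately show False using s(2) PS_PE_disjoint unfolding purely_env_def by blast
  next
    assume "t \<in> strategy_choice K"
    with s(3) \<open>s = sys_token K\<close> show False unfolding strategy_choice_def by blast
  qed
qed

lemma enabled_lifts:
  assumes K: "K \<in> reach NS" and t: "enabled N t (image_mset lp K)"
    and allowed: "purely_env N PE t \<or> t \<in> strategy_choice K"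
  obtains u where "enabled NS u K" "lt u = t"
proof -
  obtain Bm where Bm: "Bm \<subseteq># K" "image_mset lp Bm = pre N t"
    using t by (auto simp: enabled_def elim: subseteq_image_msetE)
  with transition_lifts[OF K Bm _ allowed] t obtain u where "u \<in> trans NS" "lt u = t" "pre NS u = Bm"
    unfolding enabled_def by blast
  with Bm(1) show thesis using that unfolding enabled_def by blast
qed

lemma strategy_choice_deterministic:
  assumes K: "K \<in> reach NS" and t: "t1 \<in> strategy_choice K" "t2 \<in> strategy_choice K"
    and B1: "B1 \<subseteq># K" "image_mset lp B1 = pre N t1"
    and B2: "B2 \<subseteq># K" "image_mset lp B2 = pre N t2"
  shows "t1 = t2 \<and> B1 = B2"
proof -
  have "t1 \<in> trans N" "t2 \<in> trans N"
    using t trans_image unfolding strategy_choice_def by auto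
  then obtain u1 u2 where u1: "u1 \<in> trans NS" "lt u1 = t1" "pre NS u1 = B1"
    and u2: "u2 \<in> trans NS" "lt u2 = t2" "pre NS u2 = B2"
    using transition_lifts[OF K B1] transition_lifts[OF K B2] t by blast
  have "sys_token K \<in># B1" "sys_token K \<in># B2"
    using sys_token_in_lift[OF K] t B1 B2 by blast+
  moreover have "sys_token K \<in> places NS"
    using reach_subset_places[OF K] sys_token_in[OF K] by blast
  moreover have "enabled NS u1 K" "enabled NS u2 K"
    using u1 u2 B1(1) B2(1) unfolding enabled_def by auto
  ultimately have "u1 = u2"
    using determinism[OF _ sys_token_PS[OF K] K sys_token_in[OF K]] u1 u2 by blast
  with u1 u2 show ?thesis by blast
qed

lemma strategy_choice_enabled:
  assumes K: "K \<in> reach NS" and some: "\<exists>t. enabled N t (image_mset lp K)"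
    and sys: "\<forall>t. enabled N t (image_mset lp K) \<longrightarrow> system_trans N PE t"
  shows "\<exists>t \<in> strategy_choice K. enabled N t (image_mset lp K)"
proof -
  obtain u where u: "enabled NS u K" using deadlock_avoidance[OF K] some by blast
  then have en: "enabled N (lt u) (image_mset lp K)"
    using enabled_image_mset[OF homomorphism] by blast
  have ut: "u \<in> trans NS" "pre NS u \<subseteq># K" using u unfolding enabled_def by auto
  obtain p where p: "p \<in># pre N (lt u)" "p \<notin> PE"
    using sys en unfolding system_trans_def purely_env_def by blast
  then have "p \<in> PS" using pre_subset_PS_PE trans_image[OF ut(1)] by blast
  obtain q where q: "q \<in># pre NS u" "lp q = p"
    using p(1) unfolding pre_image[OF ut(1), symmetric] by auto
  moreover from this have "q \<in># K" using ut(2) by (meson mset_subset_eqD)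
  ultimately have "q = sys_token K"
    using sys_token_unique[OF K] \<open>p \<in> PS\<close> by blast
  with q ut(1) en show ?thesis unfolding strategy_choice_def by blast
qed

lemma sys_token_fire_env:
  assumes K: "K \<in> reach NS" and u: "enabled NS u K" and env: "purely_env N PE (lt u)"
  shows "sys_token (fire NS u K) = sys_token K"
proof -
  have ut: "u \<in> trans NS" using u unfolding enabled_def by blast
  have "sys_token K \<notin># pre NS u"
  proof
    assume "sys_token K \<in># pre NS u"
    then have "lp (sys_token K) \<in># pre N (lt u)" using in_pre_image[OF ut] by blast
    then show False
      using env sys_token_PS[OF K] PS_PE_disjoint unfolding purely_env_def by blast
  qed
  then have "sys_token K \<in># fire NS u K"
    using sys_token_in[OF K] unfolding fire_def by (simp add: in_diff_count not_in_iff)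
  moreover have "fire NS u K \<in> reach NS" using reach.step[OF K u] .
  ultimately show ?thesis using sys_token_unique sys_token_PS[OF K] by metis
qed

definition realized :: "('p, 't) gvertex \<Rightarrow> bool" where
  "realized v \<longleftrightarrow> (\<exists>K \<in> reach NS. image_mset lp K = fst v
     \<and> (\<forall>c. snd v = Some c \<longrightarrow> c = strategy_choice K))"

lemma realized_gI: "realized (gI N)"
  using reach.init initial_hom unfolding realized_def gI_def initial_hom_def by force

lemma realized_not_bad:
  assumes "realized v"
  shows "v \<notin> gX N PS PE B"
proof
  assume "v \<in> gX N PS PE B"
  then obtain M c where v: "v = (M, Some c)" and bad: "M \<in> B
      \<or> (\<exists>t1 \<in> c. \<exists>t2 \<in> c. t1 \<noteq> t2 \<and> enabled N t1 M \<and> enabled N t2 M)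
      \<or> (\<exists>t \<in> c. enabled N t M \<and> (\<exists>p. 0 < count (pre N t) p \<and> count (pre N t) p < count M p))
      \<or> ((\<exists>t. enabled N t M) \<and> (\<forall>t. enabled N t M \<longrightarrow> system_trans N PE t)
          \<and> \<not> (\<exists>t \<in> c. enabled N t M))"
    unfolding gX_def by blast
  obtain K where K: "K \<in> reach NS" "image_mset lp K = M" and c: "c = strategy_choice K"
    using assms v unfolding realized_def by auto
  have lift: "\<exists>Bt. Bt \<subseteq># K \<and> image_mset lp Bt = pre N t" if "enabled N t M" for t
    using that K(2) unfolding enabled_def by (blast elim: subseteq_image_msetE)
  from bad show False
  proof (elim disjE)
    assume "M \<in> B"
    with safety K show False by blast
  next
    assume "\<exists>t1 \<in> c. \<exists>t2 \<in> c. t1 \<noteq> t2 \<and> enabled N t1 M \<and> enabled N t2 M"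
    then obtain t1 t2 where "t1 \<in> c" "t2 \<in> c" "t1 \<noteq> t2" "enabled N t1 M" "enabled N t2 M"
      by blast
    then show False using lift strategy_choice_deterministic[OF K(1)] c by metis
  next
    assume "\<exists>t \<in> c. enabled N t M \<and> (\<exists>p. 0 < count (pre N t) p \<and> count (pre N t) p < count M p)"
    then obtain t p where t: "t \<in> c" "enabled N t M"
      and p: "0 < count (pre N t) p" "count (pre N t) p < count M p"
      by blast
    have "pre N t \<subseteq># image_mset lp K" using t(2) K(2) unfolding enabled_def by blast
    then obtain B1 B2 where "B1 \<subseteq># K" "B2 \<subseteq># K" "B1 \<noteq> B2"
      "image_mset lp B1 = pre N t" "image_mset lp B2 = pre N t"
      using subseteq_image_mset_two_preimages[OF count_reach_le_1[OF K(1)] _ p(1)] p(2) K(2)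
      by metis
    then show False using strategy_choice_deterministic[OF K(1)] t(1) c by blast
  next
    assume "(\<exists>t. enabled N t M) \<and> (\<forall>t. enabled N t M \<longrightarrow> system_trans N PE t)
      \<and> \<not> (\<exists>t \<in> c. enabled N t M)"
    then show False using strategy_choice_enabled[OF K(1)] K(2) c by blast
  qed
qed

lemma realized_gV0_move:
  assumes "realized v" "v \<in> gV0 N"
  shows "\<exists>w. (v, w) \<in> gE N PS PE \<and> realized w"
proof -
  obtain M where v: "v = (M, None)" "M \<in> reach N" using assms(2) unfolding gV0_def by blast
  obtain K where K: "K \<in> reach NS" "image_mset lp K = M" using assms(1) v unfolding realized_def by auto
  have "(v, (M, Some (strategy_choice K))) \<in> gE N PS PE"
    using strategy_choice_subset_sys_post[OF K(1)] K(2) v unfolding gE_def by blast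
  moreover have "realized (M, Some (strategy_choice K))" using K unfolding realized_def by auto
  ultimately show ?thesis by blast
qed

lemma realized_gE:
  assumes "realized v" "v \<notin> gV0 N" "(v, w) \<in> gE N PS PE"
  shows "realized w"
proof -
  from assms(2,3) obtain M c t where v: "v = (M, Some c)" and en: "enabled N t M"
    and step: "purely_env N PE t \<and> w = (fire N t M, Some c)
               \<or> t \<in> c \<and> w = (fire N t M, None)"
    unfolding gE_def gV0_def by blast
  obtain K where K: "K \<in> reach NS" "image_mset lp K = M" and c: "c = strategy_choice K"
    using assms(1) v unfolding realized_def by auto
  then obtain u where u: "enabled NS u K" "lt u = t"
    using enabled_lifts[OF K(1)] en step by blast
  define K' where "K' = fire NS u K"
  have K': "K' \<in> reach NS" "image_mset lp K' = fire N t M"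
    unfolding K'_def using reach.step[OF K(1) u(1)] fire_image_mset[OF homomorphism u(1)] K(2) u(2)
    by auto
  from step show ?thesis
  proof
    assume env: "purely_env N PE t \<and> w = (fire N t M, Some c)"
    then have "strategy_choice K' = c"
      unfolding K'_def c strategy_choice_def using sys_token_fire_env[OF K(1) u(1)] u(2) by simp
    with K' env show ?thesis unfolding realized_def by auto
  next
    assume "t \<in> c \<and> w = (fire N t M, None)"
    with K' show ?thesis unfolding realized_def by auto
  qed
qed

end

theorem theorem1:
  fixes N :: "('p, 't) net" and PS PE :: "'p set" and B :: "'p multiset set"
    and NS :: "('q, 'u) net" and lp :: "'q \<Rightarrow> 'p" and lt :: "'u \<Rightarrow> 't"
  assumes "petri_game N PS PE B"
    and "one_system_player N PS"
    and "bounded_net N"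
    and "winning_da_strategy N PS PE B NS lp lt"
  shows "\<exists>Tr. winning_graph_strategy (gV0 N) (gV1 N PS) (gI N) (gE N PS PE) (gX N PS PE B) Tr"
proof -
  \<comment> \<open>Boundedness only makes the graph game finite; the strategy exists without it.\<close>
  interpret petri_game_strategy N PS PE B NS lp lt
    using assms(1,2,4) by unfold_locales
  have "gV0 N \<inter> gV1 N PS = {}" unfolding gV0_def gV1_def by blast
  then show ?thesis
    using winning_graph_strategy_if_safe_invariant[where Inv = realized]
      realized_gI realized_not_bad realized_gV0_move realized_gE
    by blast
qed

end
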